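(* Let $a>0$, $r>0$, $0<\delta<r$, and let $p\ge 2$ be an integer. For $s\in\mathbb{R}$ and sequences $\mathbf v_k=\{v_{k,n}\}_{n\ge0}\subset\ell^a_e$ ($k=1,2$), define $\mathcal M(s,\mathbf v_1,\mathbf v_2)=\{M_n(s,\mathbf v_1,\mathbf v_2)\}_{n\ge 0}$ by $$M_n(s,\mathbf v_1,\mathbf v_2)=\sum_{n_1=0}^{n}v_{1,n_1}v_{2,n-n_1}+\sum_{n_2\ge0}s^{n_2}v_{1,n+n_2}v_{2,n_2}+\sum_{n_1\ge 1}s^{n_1}v_{1,n_1}v_{2,n+n_1},$$ (products taken pointwise in $j\in\mathbb{Z}$); equivalently, for $s=|z|^2$, $\sum_{n\ge0}(z^n+\bar z^n)M_n=\big(\sum_{n_1\ge0}(z^{n_1}+\bar z^{n_1})v_{1,n_1}\big)\big(\sum_{n_2\ge0}(z^{n_2}+\bar z^{n_2})v_{2,n_2}\big)$. Define inductively $\mathcal M_2=\mathcal M$ and $\mathcal M_k(s,\mathbf v_1,\dots,\mathbf v_k)=\mathcal M_2(s,\mathbf v_1,\mathcal M_{k-1}(s,\mathbf v_2,\dots,\mathbf v_k))$. Then $s\mapsto\mathcal M_p(s,\cdot,\dots,\cdot)$ belongs to $C^\omega(B_{\mathbb{R}}(\delta^2);\mathcal L^p(X_{a,r};X_{a,r}))$, and $$\sup_{z\in B_{\mathbb{C}}(\delta)}\|\mathcal M_p(|z|^2,\cdot,\dots,\cdot)\|_{\mathcal L^p(X_{a,r};X_{a,r})}\lesssim 1.$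$
   Context: $\ell^a_e=\{u:\mathbb{Z}\to\mathbb{R}:\ \|u\|_{\ell^a_e}=(\sum_j e^{2a|j|}|u(j)|^2)^{1/2}<\infty\}$. $X_{a,r}=\{\mathbf v=\{v_n\}_{n\ge0}\subset\ell^a_e:\ \|\mathbf v\|_{a,r}=\sum_{n\ge0}r^n\|v_n\|_{\ell^a_e}<\infty\}$. For Banach spaces $X,Y$, $\mathcal L(X;Y)$ is the space of bounded linear operators, $\mathcal L^1(X;Y)=\mathcal L(X;Y)$ and $\mathcal L^n(X;Y)=\mathcal L(X;\mathcal L^{n-1}(X;Y))$ (bounded $n$-linear maps). $B_{\mathbb{R}}(\rho)=(-\rho,\rho)$, $B_{\mathbb{C}}(\rho)=\{z:|z|<\rho\}$; $C^\omega$ means real analytic. $\lesssim$ means bounded by a constant independent of $z$. *)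

theory Defs
  imports "HOL-Analysis.Analysis"
begin

type_synonym elt = "int \<Rightarrow> real"
type_synonym seqv = "nat \<Rightarrow> int \<Rightarrow> real"

definition in_le :: "real \<Rightarrow> elt \<Rightarrow> bool" where
  "in_le a u \<longleftrightarrow> (\<lambda>j. exp (2 * a * \<bar>real_of_int j\<bar>) * (u j)\<^sup>2) summable_on UNIV"

definition norm_le :: "real \<Rightarrow> elt \<Rightarrow> real" where
  "norm_le a u = sqrt (\<Sum>\<^sub>\<infinity>j. exp (2 * a * \<bar>real_of_int j\<bar>) * (u j)\<^sup>2)"

definition in_X :: "real \<Rightarrow> real \<Rightarrow> seqv \<Rightarrow> bool" where
  "in_X a r v \<longleftrightarrow> (\<forall>n. in_le a (v n)) \<and> summable (\<lambda>n. r ^ n * norm_le a (v n))"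

definition norm_X :: "real \<Rightarrow> real \<Rightarrow> seqv \<Rightarrow> real" where
  "norm_X a r v = (\<Sum>n. r ^ n * norm_le a (v n))"

definition MM :: "real \<Rightarrow> seqv \<Rightarrow> seqv \<Rightarrow> seqv" where
  "MM s v1 v2 = (\<lambda>n j.
      (\<Sum>n1=0..n. v1 n1 j * v2 (n - n1) j)
    + (\<Sum>n2. s ^ n2 * v1 (n + n2) j * v2 n2 j)
    + (\<Sum>k. s ^ (Suc k) * v1 (Suc k) j * v2 (n + Suc k) j))"

text \<open>M_k(s, v1, ..., vk) = M_2(s, v1, M_{k-1}(s, v2, ..., vk)), M_2 = M.
  (The one-element case is the identity so that M_2 [v1,v2] = M v1 v2.)\<close>
fun MMk :: "real \<Rightarrow> seqv list \<Rightarrow> seqv" where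
  "MMk s [] = (\<lambda>n j. 0)"
| "MMk s [v] = v"
| "MMk s (v # vs) = MM s v (MMk s vs)"

definition multilinear_X :: "real \<Rightarrow> real \<Rightarrow> nat \<Rightarrow> (seqv list \<Rightarrow> seqv) \<Rightarrow> bool" where
  "multilinear_X a r p T \<longleftrightarrow>
     (\<forall>vs i x y c. length vs = p \<and> (\<forall>v\<in>set vs. in_X a r v) \<and> i < p \<and> in_X a r x \<and> in_X a r y \<longrightarrow>
        T (vs[i := (\<lambda>n j. c * x n j + y n j)]) = (\<lambda>n j. c * T (vs[i := x]) n j + T (vs[i := y]) n j))"

definition bounded_mlin :: "real \<Rightarrow> real \<Rightarrow> nat \<Rightarrow> (seqv list \<Rightarrow> seqv) \<Rightarrow> bool" where
  "bounded_mlin a r p T \<longleftrightarrow>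
     multilinear_X a r p T \<and>
     (\<forall>vs. length vs = p \<and> (\<forall>v\<in>set vs. in_X a r v) \<longrightarrow> in_X a r (T vs)) \<and>
     (\<exists>C. \<forall>vs. length vs = p \<and> (\<forall>v\<in>set vs. in_X a r v) \<longrightarrow>
          norm_X a r (T vs) \<le> C * (\<Prod>v\<leftarrow>vs. norm_X a r v))"

definition mlnorm :: "real \<Rightarrow> real \<Rightarrow> nat \<Rightarrow> (seqv list \<Rightarrow> seqv) \<Rightarrow> real" where
  "mlnorm a r p T = Inf {C. 0 \<le> C \<and> (\<forall>vs. length vs = p \<and> (\<forall>v\<in>set vs. in_X a r v) \<longrightarrow>
          norm_X a r (T vs) \<le> C * (\<Prod>v\<leftarrow>vs. norm_X a r v))}"

definition analytic_mlin :: "real \<Rightarrow> real \<Rightarrow> nat \<Rightarrow> (real \<Rightarrow> seqv list \<Rightarrow> seqv) \<Rightarrow> real set \<Rightarrow> bool" where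
  "analytic_mlin a r p F S \<longleftrightarrow>
     (\<forall>s\<in>S. bounded_mlin a r p (F s)) \<and>
     (\<forall>s0\<in>S. \<exists>\<rho>>0. \<exists>A :: nat \<Rightarrow> seqv list \<Rightarrow> seqv.
        (\<forall>m. bounded_mlin a r p (A m)) \<and>
        summable (\<lambda>m. mlnorm a r p (A m) * \<rho> ^ m) \<and>
        (\<forall>s\<in>S. \<bar>s - s0\<bar> < \<rho> \<longrightarrow>
           (\<lambda>N. mlnorm a r p (\<lambda>vs n j. F s vs n j - (\<Sum>m<N. (s - s0) ^ m * A m vs n j)))
             \<longlonglongrightarrow> 0))"

end

theory Submission
  imports Defs
begin

text \<open>Pointwise products are bounded on ell^a_e because the weight is at least 1, and
  reading off the coefficient of index n + c of an element of X_{a,r} costs a factor r^-(n+c).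
  Hence M(s, v, w) = sum_c s^c D_c(v, w) with bilinear maps of norm at most 2 r^(-2c), and by
  induction on the number of arguments M_p(s) = sum_k s^k B_k with norm B_k <= K tau^-k for any
  tau < r^2. A power series of multilinear maps with such geometric bounds is analytic on
  |s| < tau (re-expand it around each s0 by the binomial theorem) and uniformly bounded on
  |s| <= delta^2 < tau.\<close>

lemma double_series_sums:
  fixes x y :: "nat \<Rightarrow> nat \<Rightarrow> real"
  assumes xy: "\<And>i k. \<bar>x i k\<bar> \<le> y i k" and ys: "\<And>i. summable (y i)"
    and yss: "summable (\<lambda>i. suminf (y i))"
  shows "\<exists>T. (\<forall>i. summable (x i)) \<and> (\<forall>k. summable (\<lambda>i. x i k)) \<and>
      (\<lambda>i. suminf (x i)) sums T \<and> (\<lambda>k. \<Sum>i. x i k) sums T \<and>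
      (\<lambda>m. \<Sum>i\<le>m. x i (m - i)) sums T"
proof -
  have y0: "\<And>i k. 0 \<le> y i k" using xy by (meson abs_ge_zero order_trans)
  have hy: "(\<lambda>(i,k). y i k) summable_on UNIV \<times> UNIV"
    by (rule summable_on_SigmaI[where g="\<lambda>i. suminf (y i)"])
      (use sums_nonneg_imp_has_sum[OF summable_sums[OF ys] y0]
        summable_nonneg_imp_summable_on[OF yss] y0 suminf_nonneg[OF ys] in auto)
  have "(\<lambda>p. norm ((\<lambda>(i,k). x i k) p)) summable_on UNIV \<times> UNIV"
    by (rule summable_on_comparison_test[OF hy]) (use xy in auto)
  then obtain T where hT: "((\<lambda>(i,k). x i k) has_sum T) (UNIV \<times> UNIV)"
    using summable_on_iff_abs_summable_on_real has_sum_infsum by blast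
  have hT': "((\<lambda>(k,i). x i k) has_sum T) (UNIV \<times> UNIV)"
    using hT by (subst (asm) has_sum_swap) (simp add: case_prod_unfold)
  have rows: "\<And>i. (x i has_sum suminf (x i)) UNIV"
    using summable_on_SigmaD1[of x UNIV "\<lambda>_. UNIV"] hT summable_on_def
    by (metis UNIV_I has_sum_imp_sums has_sum_infsum sums_unique)
  have cols: "\<And>k. ((\<lambda>i. x i k) has_sum (\<Sum>i. x i k)) UNIV"
    using summable_on_SigmaD1[of "\<lambda>k i. x i k" UNIV "\<lambda>_. UNIV"] hT' summable_on_def
    by (metis (no_types, lifting) UNIV_I case_prod_unfold has_sum_imp_sums has_sum_infsum sums_unique)
  have "((\<lambda>(m,i). x i (m - i)) has_sum T) (SIGMA m:UNIV. {..m}) =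
        ((\<lambda>(i,k). x i k) has_sum T) (UNIV \<times> UNIV)"
    by (rule has_sum_reindex_bij_witness[where j="\<lambda>(m,i). (i, m - i)" and i="\<lambda>(i,k). (i + k, i)"])
      auto
  with hT have "((\<lambda>(m,i). x i (m - i)) has_sum T) (SIGMA m:UNIV. {..m})" by simp
  hence "((\<lambda>m. \<Sum>i\<le>m. x i (m - i)) has_sum T) UNIV"
    by (rule has_sum_Sigma') auto
  moreover have "((\<lambda>i. suminf (x i)) has_sum T) UNIV"
    by (rule has_sum_Sigma'[OF hT]) (use rows in auto)
  moreover have "((\<lambda>k. \<Sum>i. x i k) has_sum T) UNIV"
    by (rule has_sum_Sigma'[OF hT']) (use cols in auto)
  ultimately show ?thesis
    using rows cols by (meson has_sum_imp_sums sums_summable)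
qed

abbreviation weight :: "real \<Rightarrow> int \<Rightarrow> real" where
  "weight a j \<equiv> exp (2 * a * \<bar>real_of_int j\<bar>)"

lemma norm_le_nonneg: "0 \<le> norm_le a u"
  unfolding norm_le_def by (auto intro!: infsum_nonneg)

lemma weighted_finite_sum_le_norm_le:
  assumes "in_le a u" "finite J"
  shows "(\<Sum>j\<in>J. weight a j * (u j)\<^sup>2) \<le> (norm_le a u)\<^sup>2"
proof -
  have "(\<Sum>j\<in>J. weight a j * (u j)\<^sup>2) \<le> (\<Sum>\<^sub>\<infinity>j. weight a j * (u j)\<^sup>2)"
    using assms unfolding in_le_def by (intro finite_sum_le_infsum) auto
  thus ?thesis unfolding norm_le_def by (simp add: infsum_nonneg)
qed

lemma in_le_if_weighted_finite_sums_le: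
  assumes S: "0 \<le> S" and le: "\<And>J. finite J \<Longrightarrow> (\<Sum>j\<in>J. weight a j * (u j)\<^sup>2) \<le> S\<^sup>2"
  shows "in_le a u \<and> norm_le a u \<le> S"
proof -
  have sm: "(\<lambda>j. weight a j * (u j)\<^sup>2) summable_on UNIV"
    by (rule nonneg_bdd_above_summable_on) (auto intro!: bdd_aboveI[where M="S\<^sup>2"] le)
  have "(\<Sum>\<^sub>\<infinity>j. weight a j * (u j)\<^sup>2) \<le> S\<^sup>2"
    by (rule infsum_le_finite_sums[OF sm]) (use le in auto)
  hence "norm_le a u \<le> sqrt (S\<^sup>2)" unfolding norm_le_def by (rule real_sqrt_le_mono)
  thus ?thesis using sm S unfolding in_le_def by simp
qed

lemma abs_le_norm_le:
  assumes a: "0 \<le> a" and u: "in_le a u"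
  shows "\<bar>u j\<bar> \<le> norm_le a u"
proof -
  have "(u j)\<^sup>2 \<le> weight a j * (u j)\<^sup>2" using mult_right_mono[of 1 "weight a j" "(u j)\<^sup>2"] a by simp
  also have "\<dots> \<le> (norm_le a u)\<^sup>2" using weighted_finite_sum_le_norm_le[OF u, of "{j}"] by simp
  finally show ?thesis using norm_le_nonneg[of a u]
    by (metis real_sqrt_abs real_sqrt_le_mono abs_of_nonneg)
qed

lemma in_le_add:
  assumes u: "in_le a u" and v: "in_le a v"
  shows "in_le a (\<lambda>j. u j + v j) \<and> norm_le a (\<lambda>j. u j + v j) \<le> norm_le a u + norm_le a v"
proof (rule in_le_if_weighted_finite_sums_le)
  show "0 \<le> norm_le a u + norm_le a v" using norm_le_nonneg by (simp add: add_nonneg_nonneg)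
  fix J :: "int set" assume J: "finite J"
  have L2: "L2_set (\<lambda>j. sqrt (weight a j) * f j) J \<le> norm_le a f" if "in_le a f" for f
  proof -
    have "L2_set (\<lambda>j. sqrt (weight a j) * f j) J = sqrt (\<Sum>j\<in>J. weight a j * (f j)\<^sup>2)"
      unfolding L2_set_def by (simp add: power_mult_distrib)
    also have "\<dots> \<le> sqrt ((norm_le a f)\<^sup>2)"
      by (rule real_sqrt_le_mono[OF weighted_finite_sum_le_norm_le[OF that J]])
    finally show ?thesis using norm_le_nonneg by simp
  qed
  have "(\<Sum>j\<in>J. weight a j * (u j + v j)\<^sup>2)
      = (L2_set (\<lambda>j. sqrt (weight a j) * u j + sqrt (weight a j) * v j) J)\<^sup>2"
    unfolding L2_set_def by (simp add: power_mult_distrib sum_nonneg distrib_left[symmetric])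
  also have "\<dots> \<le> (L2_set (\<lambda>j. sqrt (weight a j) * u j) J + L2_set (\<lambda>j. sqrt (weight a j) * v j) J)\<^sup>2"
    by (rule power_mono[OF L2_set_triangle_ineq L2_set_nonneg])
  also have "\<dots> \<le> (norm_le a u + norm_le a v)\<^sup>2"
    by (rule power_mono) (auto intro!: add_mono L2 u v add_nonneg_nonneg L2_set_nonneg)
  finally show "(\<Sum>j\<in>J. weight a j * (u j + v j)\<^sup>2) \<le> (norm_le a u + norm_le a v)\<^sup>2" .
qed

lemma in_le_scale:
  assumes u: "in_le a u"
  shows "in_le a (\<lambda>j. c * u j) \<and> norm_le a (\<lambda>j. c * u j) \<le> \<bar>c\<bar> * norm_le a u"
proof (rule in_le_if_weighted_finite_sums_le)
  show "0 \<le> \<bar>c\<bar> * norm_le a u" using norm_le_nonneg by simp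
  fix J :: "int set" assume J: "finite J"
  have "(\<Sum>j\<in>J. weight a j * (c * u j)\<^sup>2) = c\<^sup>2 * (\<Sum>j\<in>J. weight a j * (u j)\<^sup>2)"
    by (simp add: sum_distrib_left power_mult_distrib algebra_simps)
  also have "\<dots> \<le> c\<^sup>2 * (norm_le a u)\<^sup>2"
    by (rule mult_left_mono[OF weighted_finite_sum_le_norm_le[OF u J]]) simp
  finally show "(\<Sum>j\<in>J. weight a j * (c * u j)\<^sup>2) \<le> (\<bar>c\<bar> * norm_le a u)\<^sup>2"
    by (simp add: power_mult_distrib)
qed

lemma in_le_sum:
  assumes "finite I" "\<And>i. i \<in> I \<Longrightarrow> in_le a (u i)"
  shows "in_le a (\<lambda>j. \<Sum>i\<in>I. u i j) \<and> norm_le a (\<lambda>j. \<Sum>i\<in>I. u i j) \<le> (\<Sum>i\<in>I. norm_le a (u i))"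
  using assms
proof (induction I rule: finite_induct)
  case empty
  show ?case by (rule in_le_if_weighted_finite_sums_le) auto
next
  case (insert i I)
  thus ?case using in_le_add[of a "u i" "\<lambda>j. \<Sum>i\<in>I. u i j"] by force
qed

lemma in_le_mult:
  assumes a: "0 \<le> a" and u: "in_le a u" and v: "in_le a v"
  shows "in_le a (\<lambda>j. u j * v j) \<and> norm_le a (\<lambda>j. u j * v j) \<le> norm_le a u * norm_le a v"
proof (rule in_le_if_weighted_finite_sums_le)
  show "0 \<le> norm_le a u * norm_le a v" using norm_le_nonneg by simp
  fix J :: "int set" assume J: "finite J"
  have "(\<Sum>j\<in>J. weight a j * (u j * v j)\<^sup>2) \<le> (\<Sum>j\<in>J. weight a j * (u j)\<^sup>2 * (norm_le a v)\<^sup>2)"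
  proof (rule sum_mono)
    fix j
    have "(v j)\<^sup>2 \<le> (norm_le a v)\<^sup>2"
      using power_mono[OF abs_le_norm_le[OF a v] abs_ge_zero, of j 2] by simp
    thus "weight a j * (u j * v j)\<^sup>2 \<le> weight a j * (u j)\<^sup>2 * (norm_le a v)\<^sup>2"
      by (simp add: power_mult_distrib mult_left_mono mult.assoc)
  qed
  also have "\<dots> = (\<Sum>j\<in>J. weight a j * (u j)\<^sup>2) * (norm_le a v)\<^sup>2"
    by (simp add: sum_distrib_right)
  also have "\<dots> \<le> (norm_le a u)\<^sup>2 * (norm_le a v)\<^sup>2"
    by (rule mult_right_mono[OF weighted_finite_sum_le_norm_le[OF u J]]) simp
  finally show "(\<Sum>j\<in>J. weight a j * (u j * v j)\<^sup>2) \<le> (norm_le a u * norm_le a v)\<^sup>2"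
    by (simp add: power_mult_distrib)
qed

lemma in_le_suminf:
  assumes a: "0 \<le> a" and u: "\<And>k. in_le a (u k)" and s: "summable (\<lambda>k. norm_le a (u k))"
  shows "(\<forall>j. summable (\<lambda>k. u k j)) \<and> in_le a (\<lambda>j. \<Sum>k. u k j)
     \<and> norm_le a (\<lambda>j. \<Sum>k. u k j) \<le> (\<Sum>k. norm_le a (u k))"
proof -
  have sj: "\<And>j. summable (\<lambda>k. u k j)"
    by (rule summable_comparison_test[OF _ s]) (use abs_le_norm_le[OF a u] in auto)
  have partial: "(\<Sum>j\<in>J. weight a j * (\<Sum>k<K. u k j)\<^sup>2) \<le> (\<Sum>k. norm_le a (u k))\<^sup>2"
    if "finite J" for J K
  proof -
    have "norm_le a (\<lambda>j. \<Sum>k<K. u k j) \<le> (\<Sum>k<K. norm_le a (u k))"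
      using in_le_sum[of "{..<K}" a u] u by auto
    also have "\<dots> \<le> (\<Sum>k. norm_le a (u k))"
      by (rule sum_le_suminf[OF s]) (auto simp: norm_le_nonneg)
    finally have "(norm_le a (\<lambda>j. \<Sum>k<K. u k j))\<^sup>2 \<le> (\<Sum>k. norm_le a (u k))\<^sup>2"
      by (rule power_mono[OF _ norm_le_nonneg])
    moreover have "in_le a (\<lambda>j. \<Sum>k<K. u k j)" using in_le_sum[of "{..<K}" a u] u by auto
    ultimately show ?thesis using weighted_finite_sum_le_norm_le[OF _ that] by fastforce
  qed
  have "in_le a (\<lambda>j. \<Sum>k. u k j) \<and> norm_le a (\<lambda>j. \<Sum>k. u k j) \<le> (\<Sum>k. norm_le a (u k))"
  proof (rule in_le_if_weighted_finite_sums_le)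
    show "0 \<le> (\<Sum>k. norm_le a (u k))" by (rule suminf_nonneg[OF s norm_le_nonneg])
    fix J :: "int set" assume J: "finite J"
    have "(\<lambda>K. \<Sum>j\<in>J. weight a j * (\<Sum>k<K. u k j)\<^sup>2) \<longlonglongrightarrow> (\<Sum>j\<in>J. weight a j * (\<Sum>k. u k j)\<^sup>2)"
      by (intro tendsto_intros summable_LIMSEQ sj)
    thus "(\<Sum>j\<in>J. weight a j * (\<Sum>k. u k j)\<^sup>2) \<le> (\<Sum>k. norm_le a (u k))\<^sup>2"
      by (rule LIMSEQ_le_const2) (use partial[OF J] in auto)
  qed
  thus ?thesis using sj by blast
qed

lemma in_X_if_norm_le_le:
  assumes r: "0 < r" and u: "\<And>n. in_le a (u n)" and b: "\<And>n. norm_le a (u n) \<le> b n"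
    and s: "summable (\<lambda>n. r ^ n * b n)"
  shows "in_X a r u \<and> norm_X a r u \<le> (\<Sum>n. r ^ n * b n)"
proof -
  have le: "\<And>n. r ^ n * norm_le a (u n) \<le> r ^ n * b n"
    using b r by (simp add: mult_left_mono)
  have s2: "summable (\<lambda>n. r ^ n * norm_le a (u n))"
    by (rule summable_comparison_test[OF _ s]) (use le r norm_le_nonneg in auto)
  show ?thesis unfolding in_X_def norm_X_def using u s2 suminf_le[OF le s2 s] by auto
qed

lemma norm_X_nonneg: "0 < r \<Longrightarrow> in_X a r u \<Longrightarrow> 0 \<le> norm_X a r u"
  unfolding in_X_def norm_X_def by (auto intro!: suminf_nonneg simp: norm_le_nonneg)

lemma norm_le_le_norm_X:
  assumes r: "0 < r" and u: "in_X a r u"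
  shows "norm_le a (u n) \<le> norm_X a r u / r ^ n"
proof -
  have "(\<Sum>i\<in>{n}. r ^ i * norm_le a (u i)) \<le> norm_X a r u"
    unfolding norm_X_def using u r by (intro sum_le_suminf) (auto simp: in_X_def norm_le_nonneg)
  thus ?thesis using r by (simp add: field_simps)
qed

lemma abs_le_norm_X:
  assumes "0 \<le> a" "0 < r" "in_X a r u"
  shows "\<bar>u n j\<bar> \<le> norm_X a r u / r ^ n"
  using abs_le_norm_le[of a "u n" j] norm_le_le_norm_X[of r a u n] assms
  unfolding in_X_def by fastforce

lemma norm_X_shift_le:
  assumes r: "0 < r" and v: "in_X a r v"
  shows "summable (\<lambda>n. r ^ (n + c) * norm_le a (v (n + c)))"
    and "(\<Sum>n. r ^ (n + c) * norm_le a (v (n + c))) \<le> norm_X a r v"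
proof -
  have s: "summable (\<lambda>n. r ^ n * norm_le a (v n))" using v by (simp add: in_X_def)
  show "summable (\<lambda>n. r ^ (n + c) * norm_le a (v (n + c)))"
    using summable_ignore_initial_segment[OF s, of c] .
  have "0 \<le> (\<Sum>i<c. r ^ i * norm_le a (v i))" using r
    by (auto intro!: sum_nonneg simp: norm_le_nonneg)
  thus "(\<Sum>n. r ^ (n + c) * norm_le a (v (n + c))) \<le> norm_X a r v"
    unfolding norm_X_def using suminf_split_initial_segment[OF s, of c] by linarith
qed

lemma in_X_zero: "0 < r \<Longrightarrow> in_X a r (\<lambda>n j. 0) \<and> norm_X a r (\<lambda>n j. 0) \<le> 0"
  using in_X_if_norm_le_le[of r a "\<lambda>n j. 0" "\<lambda>n. 0"]
    in_le_if_weighted_finite_sums_le[of 0 a "\<lambda>j. 0"] by auto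

lemma in_X_add:
  assumes r: "0 < r" and u: "in_X a r u" and v: "in_X a r v"
  shows "in_X a r (\<lambda>n j. u n j + v n j)
    \<and> norm_X a r (\<lambda>n j. u n j + v n j) \<le> norm_X a r u + norm_X a r v"
proof -
  have us: "summable (\<lambda>n. r ^ n * norm_le a (u n))" and vs: "summable (\<lambda>n. r ^ n * norm_le a (v n))"
    using u v by (auto simp: in_X_def)
  have "in_X a r (\<lambda>n j. u n j + v n j) \<and> norm_X a r (\<lambda>n j. u n j + v n j) \<le>
      (\<Sum>n. r ^ n * (norm_le a (u n) + norm_le a (v n)))"
  proof (rule in_X_if_norm_le_le[OF r])
    fix n
    have "in_le a (u n)" "in_le a (v n)" using u v by (auto simp: in_X_def)
    thus "in_le a (\<lambda>j. u n j + v n j)"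
      "norm_le a (\<lambda>j. u n j + v n j) \<le> norm_le a (u n) + norm_le a (v n)"
      using in_le_add by blast+
  qed (unfold distrib_left, rule summable_add[OF us vs])
  moreover have "(\<Sum>n. r ^ n * (norm_le a (u n) + norm_le a (v n))) = norm_X a r u + norm_X a r v"
    unfolding norm_X_def distrib_left by (rule suminf_add[OF us vs, symmetric])
  ultimately show ?thesis by simp
qed

lemma in_X_scale:
  assumes r: "0 < r" and u: "in_X a r u"
  shows "in_X a r (\<lambda>n j. c * u n j) \<and> norm_X a r (\<lambda>n j. c * u n j) \<le> \<bar>c\<bar> * norm_X a r u"
proof -
  have us: "summable (\<lambda>n. r ^ n * norm_le a (u n))" using u by (auto simp: in_X_def)
  have eq: "\<And>n. r ^ n * (\<bar>c\<bar> * norm_le a (u n)) = \<bar>c\<bar> * (r ^ n * norm_le a (u n))" by simp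
  have "in_X a r (\<lambda>n j. c * u n j) \<and> norm_X a r (\<lambda>n j. c * u n j) \<le>
      (\<Sum>n. r ^ n * (\<bar>c\<bar> * norm_le a (u n)))"
  proof (rule in_X_if_norm_le_le[OF r])
    fix n
    have "in_le a (u n)" using u by (auto simp: in_X_def)
    thus "in_le a (\<lambda>j. c * u n j)" "norm_le a (\<lambda>j. c * u n j) \<le> \<bar>c\<bar> * norm_le a (u n)"
      using in_le_scale by blast+
  qed (unfold eq, rule summable_mult[OF us])
  moreover have "(\<Sum>n. r ^ n * (\<bar>c\<bar> * norm_le a (u n))) = \<bar>c\<bar> * norm_X a r u"
    unfolding norm_X_def eq by (rule suminf_mult[OF us])
  ultimately show ?thesis by simp
qed

lemma in_X_sum:
  assumes r: "0 < r" and "finite I" "\<And>i. i \<in> I \<Longrightarrow> in_X a r (u i)"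
  shows "in_X a r (\<lambda>n j. \<Sum>i\<in>I. u i n j)
    \<and> norm_X a r (\<lambda>n j. \<Sum>i\<in>I. u i n j) \<le> (\<Sum>i\<in>I. norm_X a r (u i))"
  using assms(2,3)
proof (induction I rule: finite_induct)
  case empty
  show ?case using in_X_zero[OF r] by simp
next
  case (insert i I)
  hence IH: "in_X a r (\<lambda>n j. \<Sum>i\<in>I. u i n j)"
      "norm_X a r (\<lambda>n j. \<Sum>i\<in>I. u i n j) \<le> (\<Sum>i\<in>I. norm_X a r (u i))"
    and ui: "in_X a r (u i)" by auto
  show ?case using in_X_add[OF r ui IH(1)] IH(2) insert(1,2) by auto
qed

lemma in_X_suminf:
  assumes a: "0 \<le> a" and r: "0 < r" and u: "\<And>k. in_X a r (u k)"
    and s: "summable (\<lambda>k. norm_X a r (u k))"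
  shows "(\<forall>n j. summable (\<lambda>k. u k n j)) \<and> in_X a r (\<lambda>n j. \<Sum>k. u k n j)
     \<and> norm_X a r (\<lambda>n j. \<Sum>k. u k n j) \<le> (\<Sum>k. norm_X a r (u k))"
proof -
  have uk: "\<And>k n. in_le a (u k n)" using u by (auto simp: in_X_def)
  have sn: "\<And>n. summable (\<lambda>k. norm_le a (u k n))"
  proof -
    fix n
    have "summable (\<lambda>k. norm_X a r (u k) / r ^ n)" using s by (rule summable_divide)
    thus "summable (\<lambda>k. norm_le a (u k n))"
      by (rule summable_comparison_test[rotated])
        (use norm_le_le_norm_X[OF r u] norm_le_nonneg in auto)
  qed
  note pointwise = in_le_suminf[OF a uk sn]
  obtain T where T: "(\<lambda>k. \<Sum>n. r ^ n * norm_le a (u k n)) sums T"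
      "(\<lambda>n. \<Sum>k. r ^ n * norm_le a (u k n)) sums T"
    using double_series_sums[of "\<lambda>k n. r ^ n * norm_le a (u k n)" "\<lambda>k n. r ^ n * norm_le a (u k n)"]
      s u r by (auto simp: norm_X_def in_X_def norm_le_nonneg)
  have T': "(\<lambda>n. r ^ n * (\<Sum>k. norm_le a (u k n))) sums T"
    using T(2) by (simp add: suminf_mult sn)
  have "in_X a r (\<lambda>n j. \<Sum>k. u k n j)
      \<and> norm_X a r (\<lambda>n j. \<Sum>k. u k n j) \<le> (\<Sum>n. r ^ n * (\<Sum>k. norm_le a (u k n)))"
    by (rule in_X_if_norm_le_le[OF r]) (use pointwise T' sums_summable in auto)
  moreover have "(\<Sum>n. r ^ n * (\<Sum>k. norm_le a (u k n))) = T" using T'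
    by (rule sums_unique[symmetric])
  moreover have "(\<Sum>k. norm_X a r (u k)) = T" using T(1) by (simp add: norm_X_def sums_iff)
  ultimately show ?thesis using pointwise by simp
qed

lemma in_X_sums_le:
  assumes a: "0 \<le> a" and r: "0 < r" and u: "\<And>k. in_X a r (u k)"
    and b: "\<And>k. norm_X a r (u k) \<le> b k" "summable b"
    and g: "\<And>n j. (\<lambda>k. u k n j) sums g n j"
  shows "in_X a r g \<and> norm_X a r g \<le> suminf b"
proof -
  have s: "summable (\<lambda>k. norm_X a r (u k))"
    by (rule summable_comparison_test[OF _ b(2)]) (use b(1) norm_X_nonneg[OF r u] in auto)
  have "g = (\<lambda>n j. \<Sum>k. u k n j)" using g by (auto simp: sums_iff)
  thus ?thesis using in_X_suminf[OF a r u s] suminf_le[OF b(1) s b(2)] by auto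
qed

definition cauchy_prod :: "seqv \<Rightarrow> seqv \<Rightarrow> seqv" where
  "cauchy_prod v w = (\<lambda>n j. \<Sum>n1=0..n. v n1 j * w (n - n1) j)"

definition shift_prod :: "nat \<Rightarrow> seqv \<Rightarrow> seqv \<Rightarrow> seqv" where
  "shift_prod c v w = (\<lambda>n j. v (n + c) j * w c j)"

definition MM_coeff :: "nat \<Rightarrow> seqv \<Rightarrow> seqv \<Rightarrow> seqv" where
  "MM_coeff c v w = (\<lambda>n j. (if c = 0 then (\<Sum>n1=0..n. v n1 j * w (n - n1) j) else 0)
      + v (n + c) j * w c j + (if c = 0 then 0 else v c j * w (n + c) j))"

lemma MM_coeff_0: "MM_coeff 0 v w = (\<lambda>n j. cauchy_prod v w n j + shift_prod 0 v w n j)"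
  unfolding MM_coeff_def cauchy_prod_def shift_prod_def by simp

lemma MM_coeff_Suc: "c \<noteq> 0 \<Longrightarrow> MM_coeff c v w = (\<lambda>n j. shift_prod c v w n j + shift_prod c w v n j)"
  unfolding MM_coeff_def shift_prod_def by (simp add: mult.commute)

lemma in_X_cauchy_prod:
  assumes a: "0 \<le> a" and r: "0 < r" and v: "in_X a r v" and w: "in_X a r w"
  shows "in_X a r (cauchy_prod v w) \<and> norm_X a r (cauchy_prod v w) \<le> norm_X a r v * norm_X a r w"
proof -
  have vl: "\<And>n. in_le a (v n)" and wl: "\<And>n. in_le a (w n)" using v w by (auto simp: in_X_def)
  define b where "b n = (\<Sum>i=0..n. norm_le a (v i) * norm_le a (w (n - i)))" for n
  have pointwise: "in_le a (cauchy_prod v w n) \<and> norm_le a (cauchy_prod v w n) \<le> b n" for n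
  proof -
    have M: "\<And>i. in_le a (\<lambda>j. v i j * w (n - i) j)
        \<and> norm_le a (\<lambda>j. v i j * w (n - i) j) \<le> norm_le a (v i) * norm_le a (w (n - i))"
      by (rule in_le_mult[OF a vl wl])
    have "(\<Sum>i=0..n. norm_le a (\<lambda>j. v i j * w (n - i) j)) \<le> b n"
      unfolding b_def by (rule sum_mono) (use M in blast)
    thus ?thesis
      using in_le_sum[of "{0..n}" a "\<lambda>i j. v i j * w (n - i) j"] M unfolding cauchy_prod_def by auto
  qed
  define f where "f i = r ^ i * norm_le a (v i)" for i
  define g where "g i = r ^ i * norm_le a (w i)" for i
  have fs: "summable (\<lambda>k. norm (f k))" using v r
    by (simp add: f_def in_X_def norm_le_nonneg abs_mult)
  have gs: "summable (\<lambda>k. norm (g k))" using w r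
    by (simp add: g_def in_X_def norm_le_nonneg abs_mult)
  have "r ^ n * b n = (\<Sum>i\<le>n. f i * g (n - i))" for n
  proof -
    have "r ^ n * b n = (\<Sum>i=0..n. r ^ n * (norm_le a (v i) * norm_le a (w (n - i))))"
      unfolding b_def by (simp add: sum_distrib_left)
    also have "\<dots> = (\<Sum>i=0..n. f i * g (n - i))"
      by (rule sum.cong[OF refl]) (simp add: f_def g_def power_add[symmetric])
    finally show ?thesis by (simp add: atLeast0AtMost)
  qed
  hence "(\<lambda>n. r ^ n * b n) sums (norm_X a r v * norm_X a r w)"
    using Cauchy_product_sums[OF fs gs] by (simp add: norm_X_def f_def g_def)
  thus ?thesis
    using in_X_if_norm_le_le[OF r, of a "cauchy_prod v w" b] pointwise sums_summable sums_unique
    by metis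
qed

lemma in_X_shift_prod:
  assumes a: "0 \<le> a" and r: "0 < r" and v: "in_X a r v" and w: "in_X a r w"
  shows "in_X a r (shift_prod c v w)
    \<and> norm_X a r (shift_prod c v w) \<le> (1 / r\<^sup>2) ^ c * (norm_X a r v * norm_X a r w)"
proof -
  have vl: "\<And>n. in_le a (v n)" and wl: "\<And>n. in_le a (w n)" using v w by (auto simp: in_X_def)
  define K where "K = norm_X a r w / r ^ c / r ^ c"
  define b where "b n = norm_le a (v (n + c)) * (norm_X a r w / r ^ c)" for n
  have pointwise: "in_le a (shift_prod c v w n) \<and> norm_le a (shift_prod c v w n) \<le> b n" for n
  proof -
    have "norm_le a (v (n + c)) * norm_le a (w c) \<le> b n"
      unfolding b_def by (rule mult_left_mono[OF norm_le_le_norm_X[OF r w] norm_le_nonneg])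
    thus ?thesis using in_le_mult[OF a vl wl, of "n + c" c] unfolding shift_prod_def by auto
  qed
  have eq: "\<And>n. r ^ n * b n = K * (r ^ (n + c) * norm_le a (v (n + c)))"
    unfolding b_def K_def using r by (simp add: power_add field_simps)
  have K0: "0 \<le> K" unfolding K_def using norm_X_nonneg[OF r w] r by simp
  have "(\<Sum>n. r ^ n * b n) = K * (\<Sum>n. r ^ (n + c) * norm_le a (v (n + c)))"
    unfolding eq by (rule suminf_mult[OF norm_X_shift_le(1)[OF r v]])
  also have "\<dots> \<le> K * norm_X a r v" by (rule mult_left_mono[OF norm_X_shift_le(2)[OF r v] K0])
  also have "\<dots> = (1 / r\<^sup>2) ^ c * (norm_X a r v * norm_X a r w)"
    unfolding K_def using r
    by (simp add: power_divide power_mult[symmetric] field_simps power2_eq_square power_mult_distrib)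
  finally show ?thesis
    using in_X_if_norm_le_le[OF r, of a "shift_prod c v w" b] pointwise
      summable_mult[OF norm_X_shift_le(1)[OF r v], of K]
    by (auto simp: eq)
qed

lemma in_X_MM_coeff:
  assumes a: "0 \<le> a" and r: "0 < r" and v: "in_X a r v" and w: "in_X a r w"
  shows "in_X a r (MM_coeff c v w)
    \<and> norm_X a r (MM_coeff c v w) \<le> 2 * (1 / r\<^sup>2) ^ c * (norm_X a r v * norm_X a r w)"
proof (cases "c = 0")
  case True
  show ?thesis
    using in_X_add[OF r, of a "cauchy_prod v w" "shift_prod 0 v w"]
      in_X_cauchy_prod[OF a r v w] in_X_shift_prod[OF a r v w, of 0]
    unfolding True MM_coeff_0 by auto
next
  case False
  show ?thesis
    using in_X_add[OF r, of a "shift_prod c v w" "shift_prod c w v"]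
      in_X_shift_prod[OF a r v w, of c] in_X_shift_prod[OF a r w v, of c]
    unfolding MM_coeff_Suc[OF False] by (auto simp: mult.commute)
qed

lemma MM_coeff_linear_left:
  "MM_coeff c (\<lambda>n j. t * x n j + y n j) w = (\<lambda>n j. t * MM_coeff c x w n j + MM_coeff c y w n j)"
  unfolding MM_coeff_def by (auto simp: algebra_simps sum.distrib sum_distrib_left intro!: ext)

lemma MM_coeff_linear_right:
  "MM_coeff c v (\<lambda>n j. t * x n j + y n j) = (\<lambda>n j. t * MM_coeff c v x n j + MM_coeff c v y n j)"
  unfolding MM_coeff_def by (auto simp: algebra_simps sum.distrib sum_distrib_left intro!: ext)

lemma MM_coeff_sums_right:
  assumes "\<And>m. (\<lambda>k. f k m j) sums g m j"
  shows "(\<lambda>k. MM_coeff c v (f k) n j) sums MM_coeff c v g n j"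
  unfolding MM_coeff_def by (cases "c = 0"; simp; intro sums_add sums_sum sums_mult assms)

lemma MM_coeff_scale_right: "MM_coeff c v (\<lambda>m j. t * f m j) n j = t * MM_coeff c v f n j"
  unfolding MM_coeff_def by (simp add: algebra_simps sum_distrib_left)

lemma shift_prod_power_summable:
  assumes a: "0 \<le> a" and r: "0 < r" and v: "in_X a r v" and w: "in_X a r w" and s: "\<bar>s\<bar> < r\<^sup>2"
  shows "summable (\<lambda>c. s ^ c * shift_prod c v w n j)"
proof (rule summable_comparison_test'[OF summable_mult[OF summable_geometric]])
  show "norm (\<bar>s\<bar> / r\<^sup>2) < 1" using s r by simp
  fix c
  have "\<bar>shift_prod c v w n j\<bar> \<le> norm_X a r (shift_prod c v w) / r ^ n"
    using abs_le_norm_X[OF a r] in_X_shift_prod[OF a r v w] by blast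
  also have "\<dots> \<le> (1 / r\<^sup>2) ^ c * (norm_X a r v * norm_X a r w) / r ^ n"
    using in_X_shift_prod[OF a r v w, of c] r by (intro divide_right_mono) auto
  finally have "\<bar>s\<bar> ^ c * \<bar>shift_prod c v w n j\<bar>
      \<le> \<bar>s\<bar> ^ c * ((1 / r\<^sup>2) ^ c * (norm_X a r v * norm_X a r w) / r ^ n)"
    by (rule mult_left_mono) simp
  thus "norm (s ^ c * shift_prod c v w n j)
      \<le> norm_X a r v * norm_X a r w / r ^ n * (\<bar>s\<bar> / r\<^sup>2) ^ c"
    by (simp add: abs_mult power_abs power_divide field_simps)
qed

lemma MM_coeff_sums:
  assumes a: "0 \<le> a" and r: "0 < r" and v: "in_X a r v" and w: "in_X a r w" and s: "\<bar>s\<bar> < r\<^sup>2"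
  shows "(\<lambda>c. s ^ c * MM_coeff c v w n j) sums MM s v w n j"
proof -
  define A where "A = cauchy_prod v w n j - shift_prod 0 w v n j"
  define f where "f c = s ^ c * shift_prod c v w n j" for c
  define g where "g c = s ^ c * shift_prod c w v n j" for c
  have f: "summable f" and g: "summable g"
    unfolding f_def g_def using shift_prod_power_summable[OF a r _ _ s] v w by blast+
  have "MM s v w n j = cauchy_prod v w n j + suminf f + (\<Sum>c. g (Suc c))"
    unfolding MM_def cauchy_prod_def f_def g_def shift_prod_def by (simp add: mult_ac)
  also have "\<dots> = A + suminf f + suminf g"
    unfolding suminf_split_head[OF g] by (simp add: A_def g_def)
  finally have MM: "MM s v w n j = A + suminf f + suminf g" .
  have "s ^ c * MM_coeff c v w n j = (if c = 0 then A else 0) + f c + g c" for c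
    unfolding A_def f_def g_def
      by (cases "c = 0") (simp_all add: MM_coeff_0 MM_coeff_Suc algebra_simps)
  moreover have "(\<lambda>c. (if c = 0 then A else 0) + f c + g c) sums (A + suminf f + suminf g)"
    using sums_single[of 0 "\<lambda>_. A"] by (intro sums_add summable_sums f g) simp
  ultimately show ?thesis unfolding MM by simp
qed

lemma abs_MM_coeff_le:
  assumes a: "0 \<le> a" and r: "0 < r" and v: "in_X a r v" and w: "in_X a r w" "norm_X a r w \<le> b"
  shows "\<bar>MM_coeff c v w n j\<bar> \<le> 2 * (1 / r\<^sup>2) ^ c * (norm_X a r v * b) / r ^ n"
proof -
  have "\<bar>MM_coeff c v w n j\<bar> \<le> norm_X a r (MM_coeff c v w) / r ^ n"
    using abs_le_norm_X[OF a r] in_X_MM_coeff[OF a r v w(1)] by blast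
  also have "\<dots> \<le> 2 * (1 / r\<^sup>2) ^ c * (norm_X a r v * norm_X a r w) / r ^ n"
    using in_X_MM_coeff[OF a r v w(1), of c] r by (intro divide_right_mono) auto
  also have "\<dots> \<le> 2 * (1 / r\<^sup>2) ^ c * (norm_X a r v * b) / r ^ n"
    using w(2) norm_X_nonneg[OF r v] r by (intro divide_right_mono mult_left_mono) auto
  finally show ?thesis .
qed

lemma in_X_power_series:
  assumes a: "0 \<le> a" and r: "0 < r"
    and W: "\<And>k. in_X a r (W k)" "\<And>k. norm_X a r (W k) \<le> K * (1 / \<tau>) ^ k"
    and s: "\<bar>s\<bar> < \<tau>" and w: "\<And>n j. (\<lambda>k. s ^ k * W k n j) sums w n j"
  shows "in_X a r w"
proof -
  have q: "0 \<le> \<bar>s\<bar> / \<tau>" "\<bar>s\<bar> / \<tau> < 1" using s by auto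
  have scaled: "in_X a r (\<lambda>n j. s ^ k * W k n j)
      \<and> norm_X a r (\<lambda>n j. s ^ k * W k n j) \<le> \<bar>s ^ k\<bar> * norm_X a r (W k)" for k
    by (rule in_X_scale[OF r W(1)])
  have bound: "norm_X a r (\<lambda>n j. s ^ k * W k n j) \<le> K * (\<bar>s\<bar> / \<tau>) ^ k" for k
  proof -
    have "norm_X a r (\<lambda>n j. s ^ k * W k n j) \<le> \<bar>s\<bar> ^ k * norm_X a r (W k)"
      using scaled by (simp add: power_abs)
    also have "\<dots> \<le> \<bar>s\<bar> ^ k * (K * (1 / \<tau>) ^ k)" by (rule mult_left_mono[OF W(2)]) simp
    finally show ?thesis by (simp add: power_divide mult.commute)
  qed
  have "summable (\<lambda>k. K * (\<bar>s\<bar> / \<tau>) ^ k)" using q by (intro summable_mult summable_geometric) simp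
  thus ?thesis
    using in_X_sums_le[where u="\<lambda>k n j. s ^ k * W k n j", OF a r _ bound _ w] scaled by blast
qed

lemma MM_series_sums:
  assumes a: "0 \<le> a" and r: "0 < r" and v: "in_X a r v" and \<tau>: "\<tau> < r\<^sup>2" and s: "\<bar>s\<bar> < \<tau>"
    and W: "\<And>k. in_X a r (W k)" "\<And>k. norm_X a r (W k) \<le> K * (1 / \<tau>) ^ k"
    and w: "\<And>n j. (\<lambda>k. s ^ k * W k n j) sums w n j"
  shows "(\<lambda>k. s ^ k * (\<Sum>c\<le>k. MM_coeff c v (W (k - c)) n j)) sums MM s v w n j"
proof -
  have t: "0 < \<tau>" using s by linarith
  have K: "0 \<le> K" using W(2)[of 0] norm_X_nonneg[OF r W(1), of 0] by simp
  define q1 where "q1 = \<bar>s\<bar> / r\<^sup>2"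
  define q2 where "q2 = \<bar>s\<bar> / \<tau>"
  have q1: "0 \<le> q1" "q1 < 1" and q2: "0 \<le> q2" "q2 < 1"
    using s \<tau> r t by (auto simp: q1_def q2_def)
  have w_X: "in_X a r w" by (rule in_X_power_series[OF a r W s w])
  define C where "C = 2 * norm_X a r v * K / r ^ n"
  define x where "x c k = s ^ c * (s ^ k * MM_coeff c v (W k) n j)" for c k
  have x_le: "\<bar>x c k\<bar> \<le> q1 ^ c * C * q2 ^ k" for c k
  proof -
    have "\<bar>MM_coeff c v (W k) n j\<bar> \<le> 2 * (1 / r\<^sup>2) ^ c * (norm_X a r v * (K * (1 / \<tau>) ^ k)) / r ^ n"
      by (rule abs_MM_coeff_le[OF a r v W])
    hence "\<bar>s\<bar> ^ c * \<bar>s\<bar> ^ k * \<bar>MM_coeff c v (W k) n j\<bar>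
        \<le> \<bar>s\<bar> ^ c * \<bar>s\<bar> ^ k * (2 * (1 / r\<^sup>2) ^ c * (norm_X a r v * (K * (1 / \<tau>) ^ k)) / r ^ n)"
      by (rule mult_left_mono) simp
    thus ?thesis
      by (simp add: x_def C_def q1_def q2_def abs_mult power_abs power_divide field_simps)
  qed
  have rows: "(\<lambda>k. q1 ^ c * C * q2 ^ k) sums (q1 ^ c * C / (1 - q2))" for c
    using sums_mult[OF geometric_sums[of q2], of "q1 ^ c * C"] q2 by simp
  have row_sums: "summable (\<lambda>k. q1 ^ c * C * q2 ^ k)" for c using rows sums_summable by blast
  have "summable (\<lambda>c. q1 ^ c * C / (1 - q2))"
    using q1 by (intro summable_divide summable_mult2 summable_geometric) simp
  hence "summable (\<lambda>c. \<Sum>k. q1 ^ c * C * q2 ^ k)" using rows by (simp add: sums_iff)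
  then obtain T where T_rows: "(\<lambda>c. suminf (x c)) sums T"
    and T_diag: "(\<lambda>m. \<Sum>c\<le>m. x c (m - c)) sums T"
    using double_series_sums[of x "\<lambda>c k. q1 ^ c * C * q2 ^ k"] x_le row_sums by blast
  have "suminf (x c) = s ^ c * MM_coeff c v w n j" for c
  proof -
    have "(\<lambda>k. MM_coeff c v (\<lambda>m i. s ^ k * W k m i) n j) sums MM_coeff c v w n j"
      by (rule MM_coeff_sums_right) (rule w)
    hence "x c sums (s ^ c * MM_coeff c v w n j)"
      unfolding x_def MM_coeff_scale_right by (rule sums_mult)
    thus ?thesis by (rule sums_unique[symmetric])
  qed
  hence "T = MM s v w n j"
    using T_rows MM_coeff_sums[OF a r v w_X, of s n j] s \<tau> sums_unique2 by auto
  moreover have "(\<Sum>c\<le>m. x c (m - c)) = s ^ m * (\<Sum>c\<le>m. MM_coeff c v (W (m - c)) n j)" for m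
    unfolding x_def sum_distrib_left
    by (rule sum.cong[OF refl]) (simp add: power_add[symmetric] mult.assoc)
  ultimately show ?thesis using T_diag by simp
qed

fun MMk_coeff :: "nat \<Rightarrow> seqv list \<Rightarrow> seqv" where
  "MMk_coeff k [] = (\<lambda>n j. 0)"
| "MMk_coeff k [v] = (if k = 0 then v else (\<lambda>n j. 0))"
| "MMk_coeff k (v # v' # vs) = (\<lambda>n j. \<Sum>c\<le>k. MM_coeff c v (MMk_coeff (k - c) (v' # vs)) n j)"

lemma MMk_coeff_Cons:
  "ws \<noteq> [] \<Longrightarrow> MMk_coeff k (v # ws) = (\<lambda>n j. \<Sum>c\<le>k. MM_coeff c v (MMk_coeff (k - c) ws) n j)"
  by (cases ws) auto

lemma MMk_Cons: "ws \<noteq> [] \<Longrightarrow> MMk s (v # ws) = MM s v (MMk s ws)"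
  by (cases ws) auto

lemma in_X_MM_coeff_convolution:
  assumes a: "0 \<le> a" and r: "0 < r" and \<tau>: "0 < \<tau>" "\<tau> < r\<^sup>2" and v: "in_X a r v"
    and W: "\<And>m. in_X a r (W m)" "\<And>m. norm_X a r (W m) \<le> K * (1 / \<tau>) ^ m"
  shows "in_X a r (\<lambda>n j. \<Sum>c\<le>k. MM_coeff c v (W (k - c)) n j)
    \<and> norm_X a r (\<lambda>n j. \<Sum>c\<le>k. MM_coeff c v (W (k - c)) n j)
      \<le> 2 / (1 - \<tau> / r\<^sup>2) * K * norm_X a r v * (1 / \<tau>) ^ k"
proof -
  define \<theta> where "\<theta> = \<tau> / r\<^sup>2"
  have \<theta>: "0 \<le> \<theta>" "\<theta> < 1" using \<tau> by (auto simp: \<theta>_def divide_less_eq)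
  have K: "0 \<le> K" using W(2)[of 0] norm_X_nonneg[OF r W(1), of 0] by simp
  have nv: "0 \<le> norm_X a r v" by (rule norm_X_nonneg[OF r v])
  have summand: "in_X a r (MM_coeff c v (W (k - c)))
      \<and> norm_X a r (MM_coeff c v (W (k - c))) \<le> 2 * K * norm_X a r v * (1 / \<tau>) ^ k * \<theta> ^ c"
    if "c \<le> k" for c
  proof -
    have "norm_X a r (MM_coeff c v (W (k - c)))
        \<le> 2 * (1 / r\<^sup>2) ^ c * (norm_X a r v * norm_X a r (W (k - c)))"
      using in_X_MM_coeff[OF a r v W(1)] by blast
    also have "\<dots> \<le> 2 * (1 / r\<^sup>2) ^ c * (norm_X a r v * (K * (1 / \<tau>) ^ (k - c)))"
      using W(2)[of "k - c"] nv by (intro mult_left_mono) auto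
    also have "\<dots> = 2 * K * norm_X a r v * (1 / \<tau>) ^ k * \<theta> ^ c"
    proof -
      have "(1 / \<tau>) ^ k = (1 / \<tau>) ^ c * (1 / \<tau>) ^ (k - c)" using that
        by (simp add: power_add[symmetric])
      thus ?thesis using \<tau> r by (simp add: \<theta>_def power_divide field_simps)
    qed
    finally show ?thesis using in_X_MM_coeff[OF a r v W(1)] by blast
  qed
  have "(\<Sum>c\<le>k. norm_X a r (MM_coeff c v (W (k - c))))
      \<le> (\<Sum>c\<le>k. 2 * K * norm_X a r v * (1 / \<tau>) ^ k * \<theta> ^ c)"
    by (rule sum_mono) (use summand in auto)
  also have "\<dots> = 2 * K * norm_X a r v * (1 / \<tau>) ^ k * (\<Sum>c\<le>k. \<theta> ^ c)"
    by (simp add: sum_distrib_left)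
  also have "\<dots> \<le> 2 * K * norm_X a r v * (1 / \<tau>) ^ k * (1 / (1 - \<theta>))"
  proof (rule mult_left_mono)
    have "(\<Sum>c\<le>k. \<theta> ^ c) \<le> (\<Sum>c. \<theta> ^ c)"
      by (rule sum_le_suminf) (use \<theta> in \<open>auto intro: summable_geometric\<close>)
    thus "(\<Sum>c\<le>k. \<theta> ^ c) \<le> 1 / (1 - \<theta>)" using \<theta> by (simp add: suminf_geometric)
  qed (use K nv \<tau> in auto)
  finally show ?thesis
    using in_X_sum[OF r, of "{..k}" a "\<lambda>c. MM_coeff c v (W (k - c))"] summand
    by (auto simp: \<theta>_def)
qed

lemma in_X_MMk_coeff:
  assumes a: "0 \<le> a" and r: "0 < r" and \<tau>: "0 < \<tau>" "\<tau> < r\<^sup>2"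
  shows "ws \<noteq> [] \<Longrightarrow> \<forall>v\<in>set ws. in_X a r v \<Longrightarrow> in_X a r (MMk_coeff k ws)
    \<and> norm_X a r (MMk_coeff k ws)
      \<le> (2 / (1 - \<tau> / r\<^sup>2)) ^ (length ws - 1) * (1 / \<tau>) ^ k * (\<Prod>v\<leftarrow>ws. norm_X a r v)"
proof (induction ws arbitrary: k)
  case Nil
  thus ?case by simp
next
  case (Cons v ws)
  have v: "in_X a r v" using Cons.prems by simp
  show ?case
  proof (cases "ws = []")
    case True
    have "0 \<le> (1 / \<tau>) ^ k * norm_X a r v" using norm_X_nonneg[OF r v] \<tau> by simp
    thus ?thesis using True v in_X_zero[OF r, of a] by auto
  next
    case False
    have "in_X a r (\<lambda>n j. \<Sum>c\<le>k. MM_coeff c v (MMk_coeff (k - c) ws) n j)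
      \<and> norm_X a r (\<lambda>n j. \<Sum>c\<le>k. MM_coeff c v (MMk_coeff (k - c) ws) n j)
        \<le> 2 / (1 - \<tau> / r\<^sup>2) * ((2 / (1 - \<tau> / r\<^sup>2)) ^ (length ws - 1) * (\<Prod>v\<leftarrow>ws. norm_X a r v))
          * norm_X a r v * (1 / \<tau>) ^ k"
      by (rule in_X_MM_coeff_convolution[OF a r \<tau> v])
        (use Cons.IH[OF False] Cons.prems in \<open>auto simp: mult_ac\<close>)
    moreover have "length ws - 1 + 1 = length (v # ws) - 1" using False by (cases ws) auto
    ultimately show ?thesis
      unfolding MMk_coeff_Cons[OF False] by (simp add: mult_ac flip: power_Suc)
  qed
qed

lemma MMk_coeff_sums:
  assumes a: "0 \<le> a" and r: "0 < r" and s: "\<bar>s\<bar> < r\<^sup>2"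
  shows "ws \<noteq> [] \<Longrightarrow> \<forall>v\<in>set ws. in_X a r v \<Longrightarrow> (\<lambda>k. s ^ k * MMk_coeff k ws n j) sums MMk s ws n j"
proof (induction ws arbitrary: n j)
  case Nil
  thus ?case by simp
next
  case (Cons v ws)
  show ?case
  proof (cases "ws = []")
    case True
    have "(\<lambda>k. s ^ k * MMk_coeff k [v] n j) = (\<lambda>k. if k = 0 then v n j else 0)" by auto
    thus ?thesis using sums_single[of 0 "\<lambda>_. v n j"] True by simp
  next
    case False
    define \<tau> where "\<tau> = (\<bar>s\<bar> + r\<^sup>2) / 2"
    have \<tau>: "0 < \<tau>" "\<tau> < r\<^sup>2" "\<bar>s\<bar> < \<tau>" using s by (auto simp: \<tau>_def)
    have "(\<lambda>k. s ^ k * (\<Sum>c\<le>k. MM_coeff c v (MMk_coeff (k - c) ws) n j)) sums MM s v (MMk s ws) n j"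
    proof (rule MM_series_sums[OF a r _ \<tau>(2,3),
          where K="(2 / (1 - \<tau> / r\<^sup>2)) ^ (length ws - 1) * (\<Prod>v\<leftarrow>ws. norm_X a r v)"])
      show "\<And>n j. (\<lambda>k. s ^ k * MMk_coeff k ws n j) sums MMk s ws n j"
        using Cons False by auto
    qed (use Cons.prems in_X_MMk_coeff[OF a r \<tau>(1,2) False] in \<open>auto simp: mult_ac\<close>)
    thus ?thesis by (simp add: MMk_coeff_Cons[OF False] MMk_Cons[OF False])
  qed
qed

lemma MMk_coeff_linear:
  "i < length vs \<Longrightarrow> MMk_coeff k (vs[i := (\<lambda>n j. t * x n j + y n j)])
    = (\<lambda>n j. t * MMk_coeff k (vs[i := x]) n j + MMk_coeff k (vs[i := y]) n j)"
proof (induction vs arbitrary: i k)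
  case Nil
  thus ?case by simp
next
  case (Cons v vs)
  show ?case
  proof (cases "vs = []")
    case True
    thus ?thesis using Cons.prems by auto
  next
    case False
    show ?thesis
    proof (cases i)
      case 0
      thus ?thesis using False
        by (simp add: MMk_coeff_Cons MM_coeff_linear_left sum.distrib sum_distrib_left)
    next
      case (Suc i')
      have i': "i' < length vs" using Cons.prems Suc by simp
      have "vs[i' := z] \<noteq> []" for z using False by simp
      thus ?thesis using Suc
        by (simp add: MMk_coeff_Cons Cons.IH[OF i'] MM_coeff_linear_right sum.distrib sum_distrib_left)
    qed
  qed
qed

lemma MMk_coeff_multilinear: "multilinear_X a r p (MMk_coeff k)"
  unfolding multilinear_X_def using MMk_coeff_linear by auto

abbreviation X_args :: "real \<Rightarrow> real \<Rightarrow> nat \<Rightarrow> seqv list \<Rightarrow> bool" where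
  "X_args a r p vs \<equiv> length vs = p \<and> (\<forall>v\<in>set vs. in_X a r v)"

definition mlin_bounded_by :: "real \<Rightarrow> real \<Rightarrow> nat \<Rightarrow> (seqv list \<Rightarrow> seqv) \<Rightarrow> real \<Rightarrow> bool" where
  "mlin_bounded_by a r p T C \<longleftrightarrow> (\<forall>vs. X_args a r p vs \<longrightarrow>
     in_X a r (T vs) \<and> norm_X a r (T vs) \<le> C * (\<Prod>v\<leftarrow>vs. norm_X a r v))"

lemma prod_norm_X_nonneg: "0 < r \<Longrightarrow> \<forall>v\<in>set vs. in_X a r v \<Longrightarrow> 0 \<le> (\<Prod>v\<leftarrow>vs. norm_X a r v)"
  using norm_X_nonneg by (auto intro!: prod_list_nonneg)

lemma mlnorm_le:
  assumes "0 \<le> C" "mlin_bounded_by a r p T C"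
  shows "0 \<le> mlnorm a r p T \<and> mlnorm a r p T \<le> C"
proof -
  let ?S = "{D. 0 \<le> D \<and> (\<forall>vs. X_args a r p vs \<longrightarrow> norm_X a r (T vs) \<le> D * (\<Prod>v\<leftarrow>vs. norm_X a r v))}"
  have C: "C \<in> ?S" using assms by (auto simp: mlin_bounded_by_def)
  have "mlnorm a r p T \<le> C" unfolding mlnorm_def
    by (rule cInf_lower[OF C bdd_belowI[where m=0]]) auto
  moreover have "?S \<noteq> {}" using C by blast
  hence "0 \<le> mlnorm a r p T" unfolding mlnorm_def by (rule cInf_greatest) auto
  ultimately show ?thesis by simp
qed

lemma bounded_mlin_if_bounded_by:
  "multilinear_X a r p T \<Longrightarrow> mlin_bounded_by a r p T C \<Longrightarrow> bounded_mlin a r p T"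
  unfolding bounded_mlin_def mlin_bounded_by_def by blast

lemma abs_le_mlin_bounded_by:
  assumes "0 \<le> a" "0 < r" "mlin_bounded_by a r p T C" "X_args a r p vs"
  shows "\<bar>T vs n j\<bar> \<le> C * (\<Prod>v\<leftarrow>vs. norm_X a r v) / r ^ n"
proof -
  have T: "in_X a r (T vs)" "norm_X a r (T vs) \<le> C * (\<Prod>v\<leftarrow>vs. norm_X a r v)"
    using assms(3,4) unfolding mlin_bounded_by_def by auto
  have "\<bar>T vs n j\<bar> \<le> norm_X a r (T vs) / r ^ n" by (rule abs_le_norm_X[OF assms(1,2) T(1)])
  also have "\<dots> \<le> C * (\<Prod>v\<leftarrow>vs. norm_X a r v) / r ^ n" using T(2) assms(2)
    by (simp add: divide_right_mono)
  finally show ?thesis .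
qed

lemma multilinear_X_series:
  assumes r: "0 < r" and B: "\<And>k. multilinear_X a r p (B k)"
    and G: "\<And>vs n j. X_args a r p vs \<Longrightarrow> (\<lambda>k. c k * B k vs n j) sums G vs n j"
  shows "multilinear_X a r p G"
proof -
  have "G (vs[i := (\<lambda>n j. t * x n j + y n j)]) n j = t * G (vs[i := x]) n j + G (vs[i := y]) n j"
    if h: "X_args a r p vs" "i < p" "in_X a r x" "in_X a r y" for vs i x y t n j
  proof -
    let ?z = "\<lambda>n j. t * x n j + y n j"
    have xy: "in_X a r x" "in_X a r y" "in_X a r ?z"
      using in_X_add[OF r, of a "\<lambda>n j. t * x n j" y] in_X_scale[OF r, of a x t] h by blast+
    have args: "X_args a r p (vs[i := z])" if "in_X a r z" for z
      using h that set_update_subset_insert[of vs i z] by auto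
    have B_lin: "B k (vs[i := ?z]) = (\<lambda>n j. t * B k (vs[i := x]) n j + B k (vs[i := y]) n j)" for k
      using B[of k] h unfolding multilinear_X_def by blast
    have "(\<lambda>k. t * (c k * B k (vs[i := x]) n j) + c k * B k (vs[i := y]) n j)
        sums (t * G (vs[i := x]) n j + G (vs[i := y]) n j)"
      using G[OF args[OF xy(1)]] G[OF args[OF xy(2)]] by (intro sums_add sums_mult)
    hence "(\<lambda>k. c k * B k (vs[i := ?z]) n j) sums (t * G (vs[i := x]) n j + G (vs[i := y]) n j)"
      unfolding B_lin by (simp add: algebra_simps)
    thus ?thesis using G[OF args[OF xy(3)]] sums_unique2 by blast
  qed
  thus ?thesis unfolding multilinear_X_def by blast
qed

lemma mlin_bounded_by_series:
  assumes a: "0 \<le> a" and r: "0 < r"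
    and B: "\<And>k. mlin_bounded_by a r p (B k) (\<beta> k)" and \<beta>: "summable (\<lambda>k. \<bar>c k\<bar> * \<beta> k)"
    and G: "\<And>vs n j. X_args a r p vs \<Longrightarrow> (\<lambda>k. c k * B k vs n j) sums G vs n j"
  shows "mlin_bounded_by a r p G (\<Sum>k. \<bar>c k\<bar> * \<beta> k)"
  unfolding mlin_bounded_by_def
proof (intro allI impI)
  fix vs assume vs: "X_args a r p vs"
  define P where "P = (\<Prod>v\<leftarrow>vs. norm_X a r v)"
  have P: "0 \<le> P" unfolding P_def using prod_norm_X_nonneg[OF r] vs by blast
  have scaled: "in_X a r (\<lambda>n j. c k * B k vs n j)
      \<and> norm_X a r (\<lambda>n j. c k * B k vs n j) \<le> \<bar>c k\<bar> * norm_X a r (B k vs)" for k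
    using in_X_scale[OF r] B vs unfolding mlin_bounded_by_def by blast
  have "norm_X a r (\<lambda>n j. c k * B k vs n j) \<le> \<bar>c k\<bar> * \<beta> k * P" for k
  proof -
    have "norm_X a r (\<lambda>n j. c k * B k vs n j) \<le> \<bar>c k\<bar> * norm_X a r (B k vs)" using scaled by blast
    also have "\<dots> \<le> \<bar>c k\<bar> * (\<beta> k * P)"
      by (rule mult_left_mono) (use B vs in \<open>auto simp: mlin_bounded_by_def P_def\<close>)
    finally show ?thesis by (simp add: mult.assoc)
  qed
  hence "in_X a r (G vs) \<and> norm_X a r (G vs) \<le> (\<Sum>k. \<bar>c k\<bar> * \<beta> k * P)"
    using in_X_sums_le[where u="\<lambda>k n j. c k * B k vs n j", OF a r _ _ summable_mult2[OF \<beta>] G[OF vs]]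
      scaled by blast
  thus "in_X a r (G vs) \<and> norm_X a r (G vs) \<le> (\<Sum>k. \<bar>c k\<bar> * \<beta> k) * (\<Prod>v\<leftarrow>vs. norm_X a r v)"
    unfolding P_def suminf_mult2[OF \<beta>] .
qed

definition taylor_majorant :: "real \<Rightarrow> real \<Rightarrow> real \<Rightarrow> nat \<Rightarrow> nat \<Rightarrow> real" where
  "taylor_majorant K \<tau> s0 m k = \<bar>real (k choose m) * s0 ^ (k - m)\<bar> * (K * (1 / \<tau>) ^ k)"

lemma taylor_majorant_nonneg: "0 \<le> K \<Longrightarrow> 0 < \<tau> \<Longrightarrow> 0 \<le> taylor_majorant K \<tau> s0 m k"
  unfolding taylor_majorant_def by simp

lemma binomial_sums: "(\<lambda>m. real (k choose m) * x ^ (k - m) * h ^ m) sums ((x + h) ^ k)"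
proof -
  have "(\<lambda>m. real (k choose m) * x ^ (k - m) * h ^ m)
      sums (\<Sum>m\<le>k. real (k choose m) * x ^ (k - m) * h ^ m)"
    by (rule sums_finite) auto
  thus ?thesis by (simp add: binomial_ring mult_ac add.commute)
qed

lemma taylor_majorant_row_sums:
  "(\<lambda>m. taylor_majorant K \<tau> s0 m k * u ^ m) sums (K * ((\<bar>s0\<bar> + u) / \<tau>) ^ k)"
proof -
  have "(\<lambda>m. K * (1 / \<tau>) ^ k * (real (k choose m) * \<bar>s0\<bar> ^ (k - m) * u ^ m))
      sums (K * (1 / \<tau>) ^ k * (\<bar>s0\<bar> + u) ^ k)"
    by (rule sums_mult[OF binomial_sums])
  thus ?thesis
    by (simp add: taylor_majorant_def abs_mult power_abs power_divide mult_ac)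
qed

lemma summable_taylor_majorant_weighted:
  assumes K: "0 \<le> K" and u: "0 \<le> u" and su: "\<bar>s0\<bar> + u < \<tau>"
  shows "summable (\<lambda>k. taylor_majorant K \<tau> s0 m k * u ^ m)"
    and "summable (\<lambda>m. \<Sum>k. taylor_majorant K \<tau> s0 m k * u ^ m)"
proof -
  have \<tau>: "0 < \<tau>" using su u abs_ge_zero[of s0] by linarith
  define y where "y k m = taylor_majorant K \<tau> s0 m k * u ^ m" for k m
  have y: "\<bar>y k m\<bar> \<le> y k m" for k m
    using taylor_majorant_nonneg[OF K \<tau>] u by (simp add: y_def)
  have rows: "summable (y k)" for k
    using taylor_majorant_row_sums sums_summable unfolding y_def by blast
  have "summable (\<lambda>k. K * ((\<bar>s0\<bar> + u) / \<tau>) ^ k)"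
    using su u \<tau> by (intro summable_mult summable_geometric) simp
  hence "summable (\<lambda>k. suminf (y k))"
    using taylor_majorant_row_sums unfolding y_def by (simp add: sums_iff)
  then obtain T where "\<forall>m. summable (\<lambda>k. y k m)" "(\<lambda>m. \<Sum>k. y k m) sums T"
    using double_series_sums[of y y] y rows by blast
  thus "summable (\<lambda>k. taylor_majorant K \<tau> s0 m k * u ^ m)"
    "summable (\<lambda>m. \<Sum>k. taylor_majorant K \<tau> s0 m k * u ^ m)"
    unfolding y_def using sums_summable by blast+
qed

lemma summable_taylor_majorant:
  assumes K: "0 \<le> K" and s0: "\<bar>s0\<bar> < \<tau>"
  shows "summable (\<lambda>k. taylor_majorant K \<tau> s0 m k)"
proof -
  define \<rho> where "\<rho> = (\<tau> - \<bar>s0\<bar>) / 2"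
  have \<rho>: "0 < \<rho>" "\<bar>s0\<bar> + \<rho> < \<tau>" using s0 by (auto simp: \<rho>_def field_simps)
  have "summable (\<lambda>k. taylor_majorant K \<tau> s0 m k * \<rho> ^ m * (1 / \<rho> ^ m))"
    by (rule summable_mult2[OF summable_taylor_majorant_weighted(1)[OF K _ \<rho>(2)]]) (use \<rho> in simp)
  thus ?thesis using \<rho> by simp
qed

lemma suminf_taylor_majorant_nonneg:
  "0 \<le> K \<Longrightarrow> \<bar>s0\<bar> < \<tau> \<Longrightarrow> 0 \<le> (\<Sum>k. taylor_majorant K \<tau> s0 m k)"
  using suminf_nonneg[OF summable_taylor_majorant] taylor_majorant_nonneg by fastforce

lemma summable_taylor_majorant_series:
  assumes K: "0 \<le> K" and \<rho>: "0 \<le> \<rho>" "\<bar>s0\<bar> + \<rho> < \<tau>"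
  shows "summable (\<lambda>m. (\<Sum>k. taylor_majorant K \<tau> s0 m k) * \<rho> ^ m)"
proof -
  have "\<bar>s0\<bar> < \<tau>" using \<rho> by linarith
  thus ?thesis
    using summable_taylor_majorant_weighted(2)[OF K \<rho>] suminf_mult2[OF summable_taylor_majorant[OF K]]
    by simp
qed

definition taylor_coeff :: "(nat \<Rightarrow> seqv list \<Rightarrow> seqv) \<Rightarrow> real \<Rightarrow> nat \<Rightarrow> seqv list \<Rightarrow> seqv" where
  "taylor_coeff B s0 m vs = (\<lambda>n j. \<Sum>k. real (k choose m) * s0 ^ (k - m) * B k vs n j)"

locale mlin_power_series =
  fixes a r \<tau> K :: real and p :: nat
    and B :: "nat \<Rightarrow> seqv list \<Rightarrow> seqv" and F :: "real \<Rightarrow> seqv list \<Rightarrow> seqv"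
  assumes a: "0 \<le> a" and r: "0 < r" and K: "0 \<le> K"
    and B_multilinear: "\<And>k. multilinear_X a r p (B k)"
    and B_bounded: "\<And>k. mlin_bounded_by a r p (B k) (K * (1 / \<tau>) ^ k)"
    and F_sums: "\<And>s vs n j. \<bar>s\<bar> < \<tau> \<Longrightarrow> X_args a r p vs \<Longrightarrow> (\<lambda>k. s ^ k * B k vs n j) sums F s vs n j"
begin

lemma F_bounded:
  assumes s: "\<bar>s\<bar> < \<tau>"
  shows "bounded_mlin a r p (F s) \<and> mlnorm a r p (F s) \<le> K / (1 - \<bar>s\<bar> / \<tau>)"
proof -
  have \<tau>: "0 < \<tau>" using s abs_ge_zero[of s] by linarith
  hence q: "norm (\<bar>s\<bar> / \<tau>) < 1" using s by simp
  have "(\<lambda>k. \<bar>s ^ k\<bar> * (K * (1 / \<tau>) ^ k)) = (\<lambda>k. K * (\<bar>s\<bar> / \<tau>) ^ k)"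
    by (simp add: power_abs power_divide mult.commute)
  hence "(\<lambda>k. \<bar>s ^ k\<bar> * (K * (1 / \<tau>) ^ k)) sums (K / (1 - \<bar>s\<bar> / \<tau>))"
    using sums_mult[OF geometric_sums[OF q], of K] by simp
  hence "mlin_bounded_by a r p (F s) (K / (1 - \<bar>s\<bar> / \<tau>))"
    using mlin_bounded_by_series[OF a r B_bounded _ F_sums[OF s]] by (metis sums_iff)
  moreover have "0 \<le> K / (1 - \<bar>s\<bar> / \<tau>)" using K q \<tau> by simp
  ultimately show ?thesis
    using mlnorm_le bounded_mlin_if_bounded_by multilinear_X_series[OF r B_multilinear F_sums[OF s]]
    by blast
qed

lemma mlnorm_F_le:
  assumes s: "\<bar>s\<bar> \<le> \<sigma>" and \<sigma>: "\<sigma> < \<tau>"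
  shows "mlnorm a r p (F s) \<le> K / (1 - \<sigma> / \<tau>)"
proof -
  have \<tau>: "0 < \<tau>" using s \<sigma> abs_ge_zero[of s] by linarith
  have "\<bar>s\<bar> / \<tau> \<le> \<sigma> / \<tau>" "\<sigma> / \<tau> < 1" using s \<sigma> \<tau> by (auto intro: divide_right_mono)
  hence "K / (1 - \<bar>s\<bar> / \<tau>) \<le> K / (1 - \<sigma> / \<tau>)" by (intro divide_left_mono K) auto
  thus ?thesis using F_bounded[of s] s \<sigma> by simp
qed

lemma taylor_coeff_sums:
  assumes s0: "\<bar>s0\<bar> < \<tau>" and vs: "X_args a r p vs"
  shows "(\<lambda>k. real (k choose m) * s0 ^ (k - m) * B k vs n j) sums taylor_coeff B s0 m vs n j"
proof -
  have "summable (\<lambda>k. real (k choose m) * s0 ^ (k - m) * B k vs n j)"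
  proof (rule summable_comparison_test'[OF summable_mult2[OF summable_taylor_majorant[OF K s0]]])
    fix k
    have "\<bar>B k vs n j\<bar> \<le> K * (1 / \<tau>) ^ k * ((\<Prod>v\<leftarrow>vs. norm_X a r v) / r ^ n)"
      using abs_le_mlin_bounded_by[OF a r B_bounded vs] by simp
    hence "\<bar>real (k choose m) * s0 ^ (k - m)\<bar> * \<bar>B k vs n j\<bar>
        \<le> \<bar>real (k choose m) * s0 ^ (k - m)\<bar> * (K * (1 / \<tau>) ^ k * ((\<Prod>v\<leftarrow>vs. norm_X a r v) / r ^ n))"
      by (rule mult_left_mono) simp
    thus "norm (real (k choose m) * s0 ^ (k - m) * B k vs n j)
        \<le> taylor_majorant K \<tau> s0 m k * ((\<Prod>v\<leftarrow>vs. norm_X a r v) / r ^ n)"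
      unfolding taylor_majorant_def real_norm_def abs_mult[of _ "B k vs n j", symmetric]
      by (simp only: mult.assoc)
  qed
  thus ?thesis unfolding taylor_coeff_def by (rule summable_sums)
qed

lemma taylor_coeff_bounded:
  assumes s0: "\<bar>s0\<bar> < \<tau>"
  shows "multilinear_X a r p (taylor_coeff B s0 m)
    \<and> mlin_bounded_by a r p (taylor_coeff B s0 m) (\<Sum>k. taylor_majorant K \<tau> s0 m k)"
  using multilinear_X_series[OF r B_multilinear taylor_coeff_sums[OF s0]]
    mlin_bounded_by_series[OF a r B_bounded _ taylor_coeff_sums[OF s0]]
    summable_taylor_majorant[OF K s0]
  unfolding taylor_majorant_def by blast

lemma F_taylor_sums:
  assumes s: "\<bar>s0\<bar> + \<bar>s - s0\<bar> < \<tau>" and vs: "X_args a r p vs"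
  shows "(\<lambda>m. (s - s0) ^ m * taylor_coeff B s0 m vs n j) sums F s vs n j"
proof -
  have s0: "\<bar>s0\<bar> < \<tau>" and s': "\<bar>s\<bar> < \<tau>" using s by linarith+
  define Q where "Q = (\<Prod>v\<leftarrow>vs. norm_X a r v) / r ^ n"
  have Q: "0 \<le> Q" using prod_norm_X_nonneg[OF r] vs r by (simp add: Q_def)
  define x where "x k m = real (k choose m) * s0 ^ (k - m) * (s - s0) ^ m * B k vs n j" for k m
  define y where "y k m = taylor_majorant K \<tau> s0 m k * \<bar>s - s0\<bar> ^ m * Q" for k m
  have x_le: "\<bar>x k m\<bar> \<le> y k m" for k m
  proof -
    have "\<bar>B k vs n j\<bar> \<le> K * (1 / \<tau>) ^ k * Q"
      using abs_le_mlin_bounded_by[OF a r B_bounded vs] by (simp add: Q_def)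
    hence "\<bar>real (k choose m) * s0 ^ (k - m)\<bar> * \<bar>s - s0\<bar> ^ m * \<bar>B k vs n j\<bar>
        \<le> \<bar>real (k choose m) * s0 ^ (k - m)\<bar> * \<bar>s - s0\<bar> ^ m * (K * (1 / \<tau>) ^ k * Q)"
      by (rule mult_left_mono) simp
    thus ?thesis by (simp add: x_def y_def taylor_majorant_def abs_mult power_abs mult_ac)
  qed
  have rows: "y k sums (K * ((\<bar>s0\<bar> + \<bar>s - s0\<bar>) / \<tau>) ^ k * Q)" for k
    unfolding y_def by (rule sums_mult2[OF taylor_majorant_row_sums])
  have "norm ((\<bar>s0\<bar> + \<bar>s - s0\<bar>) / \<tau>) < 1" using s s0 by simp
  hence "summable (\<lambda>k. suminf (y k))"
    using rows by (simp add: sums_iff summable_mult summable_mult2 summable_geometric)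
  then obtain T where T_rows: "(\<lambda>k. suminf (x k)) sums T" and T_cols: "(\<lambda>m. \<Sum>k. x k m) sums T"
    using double_series_sums[of x y] x_le rows sums_summable by blast
  have "suminf (x k) = s ^ k * B k vs n j" for k
    using sums_mult2[OF binomial_sums[of k s0 "s - s0"], of "B k vs n j"]
    unfolding x_def by (simp add: sums_iff)
  hence "T = F s vs n j" using T_rows F_sums[OF s' vs] by (simp add: sums_iff)
  moreover have "(\<Sum>k. x k m) = (s - s0) ^ m * taylor_coeff B s0 m vs n j" for m
    using sums_mult[OF taylor_coeff_sums[OF s0 vs], of "(s - s0) ^ m" m n j]
    unfolding x_def by (simp add: sums_iff mult_ac)
  ultimately show ?thesis using T_cols by simp
qed

lemma taylor_remainder_mlnorm_le:
  assumes \<rho>: "0 \<le> \<rho>" "\<bar>s0\<bar> + \<rho> < \<tau>" and s: "\<bar>s - s0\<bar> \<le> \<rho>"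
  defines "aa m \<equiv> \<Sum>k. taylor_majorant K \<tau> s0 m k"
  shows "0 \<le> mlnorm a r p (\<lambda>vs n j. F s vs n j - (\<Sum>m<N. (s - s0) ^ m * taylor_coeff B s0 m vs n j))
    \<and> mlnorm a r p (\<lambda>vs n j. F s vs n j - (\<Sum>m<N. (s - s0) ^ m * taylor_coeff B s0 m vs n j))
      \<le> (\<Sum>m. aa (m + N) * \<rho> ^ (m + N))"
    (is "0 \<le> mlnorm a r p ?R \<and> _")
proof -
  have s0: "\<bar>s0\<bar> < \<tau>" using \<rho> by linarith
  have aa: "0 \<le> aa m" for m unfolding aa_def using suminf_taylor_majorant_nonneg[OF K s0] .
  have g: "summable (\<lambda>m. aa m * \<rho> ^ m)"
    unfolding aa_def by (rule summable_taylor_majorant_series[OF K \<rho>])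
  have le: "\<bar>(s - s0) ^ (m + N)\<bar> * aa (m + N) \<le> aa (m + N) * \<rho> ^ (m + N)" for m
    using mult_right_mono[OF power_mono[OF s abs_ge_zero, of "m + N"] aa[of "m + N"]]
    by (simp add: power_abs mult.commute)
  have tail: "summable (\<lambda>m. aa (m + N) * \<rho> ^ (m + N))"
    using summable_ignore_initial_segment[OF g, of N] .
  have summ: "summable (\<lambda>m. \<bar>(s - s0) ^ (m + N)\<bar> * aa (m + N))"
    by (rule summable_comparison_test'[OF tail]) (use le aa in \<open>simp add: abs_mult\<close>)
  have R_sums: "(\<lambda>m. (s - s0) ^ (m + N) * taylor_coeff B s0 (m + N) vs n j) sums ?R vs n j"
    if "X_args a r p vs" for vs n j
    using F_taylor_sums[OF _ that] \<rho> s by (subst sums_iff_shift) simp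
  have "mlin_bounded_by a r p ?R (\<Sum>m. \<bar>(s - s0) ^ (m + N)\<bar> * aa (m + N))"
    by (rule mlin_bounded_by_series[where B="\<lambda>m. taylor_coeff B s0 (m + N)", OF a r _ summ R_sums])
      (use taylor_coeff_bounded[OF s0] in \<open>auto simp: aa_def\<close>)
  moreover have "0 \<le> (\<Sum>m. \<bar>(s - s0) ^ (m + N)\<bar> * aa (m + N))"
    by (rule suminf_nonneg[OF summ]) (simp add: aa)
  moreover have "(\<Sum>m. \<bar>(s - s0) ^ (m + N)\<bar> * aa (m + N)) \<le> (\<Sum>m. aa (m + N) * \<rho> ^ (m + N))"
    by (rule suminf_le[OF le summ tail])
  ultimately show ?thesis using mlnorm_le by fastforce
qed

lemma analytic:
  assumes S: "\<And>s. s \<in> S \<Longrightarrow> \<bar>s\<bar> < \<tau>"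
  shows "analytic_mlin a r p F S"
  unfolding analytic_mlin_def
proof (intro conjI ballI)
  fix s assume "s \<in> S"
  thus "bounded_mlin a r p (F s)" using F_bounded S by blast
next
  fix s0 assume "s0 \<in> S"
  hence s0: "\<bar>s0\<bar> < \<tau>" using S by blast
  define \<rho> where "\<rho> = (\<tau> - \<bar>s0\<bar>) / 2"
  have \<rho>: "0 < \<rho>" "\<bar>s0\<bar> + \<rho> < \<tau>" using s0 by (auto simp: \<rho>_def field_simps)
  define aa where "aa m = (\<Sum>k. taylor_majorant K \<tau> s0 m k)" for m
  have aa: "0 \<le> aa m" for m unfolding aa_def using suminf_taylor_majorant_nonneg[OF K s0] .
  have g: "summable (\<lambda>m. aa m * \<rho> ^ m)"
    unfolding aa_def using summable_taylor_majorant_series[OF K _ \<rho>(2)] \<rho>(1) by simp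
  have coeff: "bounded_mlin a r p (taylor_coeff B s0 m)
      \<and> 0 \<le> mlnorm a r p (taylor_coeff B s0 m) \<and> mlnorm a r p (taylor_coeff B s0 m) \<le> aa m" for m
    using taylor_coeff_bounded[OF s0, of m] bounded_mlin_if_bounded_by mlnorm_le[OF aa]
    unfolding aa_def by blast
  have "summable (\<lambda>m. mlnorm a r p (taylor_coeff B s0 m) * \<rho> ^ m)"
    by (rule summable_comparison_test'[OF g])
      (use coeff \<rho> in \<open>auto simp: abs_mult intro: mult_right_mono\<close>)
  moreover have "(\<lambda>N. mlnorm a r p (\<lambda>vs n j. F s vs n j
      - (\<Sum>m<N. (s - s0) ^ m * taylor_coeff B s0 m vs n j))) \<longlonglongrightarrow> 0"
    if "\<bar>s - s0\<bar> < \<rho>" for s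
  proof (rule tendsto_sandwich[OF _ _ tendsto_const])
    show "(\<lambda>N. \<Sum>m. aa (m + N) * \<rho> ^ (m + N)) \<longlonglongrightarrow> 0"
      by (rule LIMSEQ_I) (use suminf_exist_split[OF _ g] in simp)
  qed (use taylor_remainder_mlnorm_le[OF _ \<rho>(2)] \<rho> that in \<open>auto simp: aa_def\<close>)
  ultimately show "\<exists>\<rho>>0. \<exists>A. (\<forall>m. bounded_mlin a r p (A m)) \<and> summable (\<lambda>m. mlnorm a r p (A m) * \<rho> ^ m)
      \<and> (\<forall>s\<in>S. \<bar>s - s0\<bar> < \<rho> \<longrightarrow> (\<lambda>N. mlnorm a r p (\<lambda>vs n j. F s vs n j
          - (\<Sum>m<N. (s - s0) ^ m * A m vs n j))) \<longlonglongrightarrow> 0)"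
    using \<rho>(1) coeff by blast
qed

end

lemma MMk_power_series:
  assumes a: "0 \<le> a" and r: "0 < r" and \<tau>: "0 < \<tau>" "\<tau> < r\<^sup>2" and p: "p \<noteq> 0"
  shows "mlin_power_series a r \<tau> ((2 / (1 - \<tau> / r\<^sup>2)) ^ (p - 1)) p MMk_coeff MMk"
proof
  have "\<tau> / r\<^sup>2 < 1" using \<tau> by (auto simp: divide_less_eq)
  thus "0 \<le> (2 / (1 - \<tau> / r\<^sup>2)) ^ (p - 1)" by simp
  show "mlin_bounded_by a r p (MMk_coeff k) ((2 / (1 - \<tau> / r\<^sup>2)) ^ (p - 1) * (1 / \<tau>) ^ k)" for k
    unfolding mlin_bounded_by_def
  proof (intro allI impI)
    fix vs assume vs: "X_args a r p vs"
    hence "vs \<noteq> []" using p by auto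
    thus "in_X a r (MMk_coeff k vs) \<and> norm_X a r (MMk_coeff k vs)
        \<le> (2 / (1 - \<tau> / r\<^sup>2)) ^ (p - 1) * (1 / \<tau>) ^ k * (\<Prod>v\<leftarrow>vs. norm_X a r v)"
      using in_X_MMk_coeff[OF a r \<tau>, of vs k] vs by simp
  qed
  show "(\<lambda>k. s ^ k * MMk_coeff k vs n j) sums MMk s vs n j"
    if "\<bar>s\<bar> < \<tau>" "X_args a r p vs" for s vs n j
  proof -
    have "vs \<noteq> []" "\<bar>s\<bar> < r\<^sup>2" using that \<tau> p by auto
    thus ?thesis using MMk_coeff_sums[OF a r, of s vs n j] that(2) by blast
  qed
qed (use a r MMk_coeff_multilinear in auto)

theorem lemma2p2:
  fixes a r \<delta> :: real and p :: nat
  assumes "a > 0" and "r > 0" and "0 < \<delta>" and "\<delta> < r" and "p \<ge> 2"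
  shows "analytic_mlin a r p (\<lambda>s vs. MMk s vs) {-(\<delta>\<^sup>2)<..<\<delta>\<^sup>2}
         \<and> (\<exists>C. \<forall>z::complex. cmod z < \<delta> \<longrightarrow> mlnorm a r p (MMk ((cmod z)\<^sup>2)) \<le> C)"
proof -
  define \<tau> where "\<tau> = (\<delta>\<^sup>2 + r\<^sup>2) / 2"
  have "\<delta>\<^sup>2 < r\<^sup>2" "0 < \<delta>\<^sup>2" using assms by (auto intro: power_strict_mono)
  hence "0 < \<tau> \<and> \<tau> < r\<^sup>2 \<and> \<delta>\<^sup>2 < \<tau>" unfolding \<tau>_def by (simp only: field_simps) linarith
  hence \<tau>: "0 < \<tau>" "\<tau> < r\<^sup>2" "\<delta>\<^sup>2 < \<tau>" by auto
  interpret mlin_power_series a r \<tau> "(2 / (1 - \<tau> / r\<^sup>2)) ^ (p - 1)" p MMk_coeff MMk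
    by (rule MMk_power_series) (use assms \<tau> in auto)
  have "analytic_mlin a r p MMk {-(\<delta>\<^sup>2)<..<\<delta>\<^sup>2}" by (rule analytic) (use \<tau> in auto)
  moreover have "mlnorm a r p (MMk ((cmod z)\<^sup>2)) \<le> (2 / (1 - \<tau> / r\<^sup>2)) ^ (p - 1) / (1 - \<delta>\<^sup>2 / \<tau>)"
    if "cmod z < \<delta>" for z :: complex
    using mlnorm_F_le[of "(cmod z)\<^sup>2" "\<delta>\<^sup>2"] power_strict_mono[OF that, of 2] \<tau> by simp
  ultimately show ?thesis by blast
qed

end
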